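(* Let $d>1$ be an integer and $\mu>0$. Let $A,B$ be sequences of non-negative integers bounded by $\mu$ with $\mathrm{DS}(A,d)<\mathrm{DS}(B,d)$. Then there exist integer sequences $C$ and $X$ such that $A[0]+C[0]+X[0]=B[0]$ and $A[i]+C[i]+X[i]=B[i]+d\cdot X[i-1]$ for all $i\ge1$, and moreover $0\le C[0]\le \mu\cdot\frac{d}{d-1}$, $0\le C[i]<d$ for all $i\ge1$, and $|X[i]|\le 1+\frac{\mu}{d-1}$ for all $i\ge0$.
   Context: $\mathrm{DS}(A,d)=\sum_{i\ge0}A[i]/d^i$. *)

theory Defs
  imports Complex_Main
begin

definition DS :: "(nat \<Rightarrow> int) \<Rightarrow> int \<Rightarrow> real" where
  "DS A d = (\<Sum>i. real_of_int (A i) / real_of_int d ^ i)"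

end

theory Submission imports Defs begin

text \<open>With \<open>D = B - A\<close> and \<open>S = DS(B,d) - DS(A,d) = DS(D,d) > 0\<close>, take for \<open>C\<close> the base-\<open>d\<close>
expansion of \<open>S\<close>: \<open>C[0] = \<lfloor>S\<rfloor>\<close> and \<open>C[i]\<close> the \<open>i\<close>-th fractional digit. The carries are then forced:
\<open>X[i] = P[i] - \<lfloor>d^i S\<rfloor>\<close>, where \<open>P[i] = \<Sum>j\<le>i D[j] d^(i-j)\<close> is the Horner prefix of \<open>D\<close>.
Since \<open>d^i S - P[i]\<close> is the scaled tail \<open>\<Sum>n>i D[n] / d^(n-i)\<close>, of modulus at most \<open>\<mu>/(d-1)\<close>,
the carries are bounded by \<open>1 + \<mu>/(d-1)\<close>.\<close>

lemma summable_divide_power_bounded: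
  fixes r \<mu> :: real and f :: "nat \<Rightarrow> real"
  assumes "r > 1" and "\<And>n. \<bar>f n\<bar> \<le> \<mu>"
  shows "summable (\<lambda>n. norm (f n / r^n))"
proof (rule summable_comparison_test)
  show "summable (\<lambda>n. \<mu> * (1/r)^n)"
    using assms(1) by (intro summable_mult summable_geometric) simp
  show "\<exists>N. \<forall>n\<ge>N. norm (norm (f n / r^n)) \<le> \<mu> * (1/r)^n"
    using assms by (simp add: power_divide divide_right_mono)
qed

lemma abs_suminf_divide_power_le:
  fixes r \<mu> :: real and f :: "nat \<Rightarrow> real"
  assumes "r > 1" and "\<And>n. \<bar>f n\<bar> \<le> \<mu>"
  shows "\<bar>\<Sum>n. f n / r^n\<bar> \<le> \<mu> * r / (r - 1)"
proof -
  have inv_r: "norm (1/r) < 1" using assms(1) by simp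
  have summable: "summable (\<lambda>n. norm (f n / r^n))"
    using summable_divide_power_bounded[OF assms] .
  have "\<bar>\<Sum>n. f n / r^n\<bar> \<le> (\<Sum>n. norm (f n / r^n))"
    using summable_norm[OF summable] by simp
  also have "\<dots> \<le> (\<Sum>n. \<mu> * (1/r)^n)"
    using assms summable inv_r
    by (intro suminf_le summable_mult summable_geometric) (simp_all add: power_divide divide_right_mono)
  also have "\<dots> = \<mu> * (1 / (1 - 1/r))"
    using suminf_mult[of "\<lambda>n. (1/r)^n" \<mu>] suminf_geometric[OF inv_r] inv_r by simp
  also have "\<dots> = \<mu> * r / (r - 1)"
    using assms(1) by (simp add: field_simps)
  finally show ?thesis .
qed

lemma summable_DS:
  assumes "d > 1" and "\<And>i. \<bar>real_of_int (A i)\<bar> \<le> \<mu>"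
  shows "summable (\<lambda>i. real_of_int (A i) / real_of_int d ^ i)"
  using assms by (intro summable_norm_cancel[OF summable_divide_power_bounded]) auto

lemma abs_DS_le:
  assumes "d > 1" and "\<And>i. \<bar>real_of_int (A i)\<bar> \<le> \<mu>"
  shows "\<bar>DS A d\<bar> \<le> \<mu> * (real_of_int d / (real_of_int d - 1))"
  using abs_suminf_divide_power_le[of "real_of_int d"] assms unfolding DS_def by auto

lemma DS_nonneg:
  assumes "d > 1" and "\<And>i. 0 \<le> A i" and "\<And>i. \<bar>real_of_int (A i)\<bar> \<le> \<mu>"
  shows "0 \<le> DS A d"
  unfolding DS_def using assms summable_DS[OF assms(1,3)] by (intro suminf_nonneg) auto

lemma DS_diff:
  assumes "d > 1" and "\<And>i. \<bar>real_of_int (A i)\<bar> \<le> \<mu>" and "\<And>i. \<bar>real_of_int (B i)\<bar> \<le> \<nu>"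
  shows "DS B d - DS A d = DS (\<lambda>i. B i - A i) d"
  unfolding DS_def
  using suminf_diff[OF summable_DS[OF assms(1,3)] summable_DS[OF assms(1,2)]]
  by (simp add: diff_divide_distrib)

fun horner_prefix :: "int \<Rightarrow> (nat \<Rightarrow> int) \<Rightarrow> nat \<Rightarrow> int" where
  "horner_prefix d D 0 = D 0"
| "horner_prefix d D (Suc i) = d * horner_prefix d D i + D (Suc i)"

lemma of_int_horner_prefix:
  assumes "d \<noteq> 0"
  shows "real_of_int (horner_prefix d D i)
           = real_of_int d ^ i * (\<Sum>j<Suc i. real_of_int (D j) / real_of_int d ^ j)"
  by (induction i) (use assms in \<open>simp_all add: field_simps\<close>)

lemma horner_prefix_approx_DS:
  assumes "d > 1" and bounded: "\<And>i. \<bar>real_of_int (D i)\<bar> \<le> \<mu>"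
  shows "\<bar>real_of_int (horner_prefix d D i) - real_of_int d ^ i * DS D d\<bar> \<le> \<mu> / (real_of_int d - 1)"
proof -
  define r where "r = real_of_int d"
  define tail where "tail = (\<Sum>n. real_of_int (D (n + Suc i)) / r^n)"
  have r: "r > 1" using assms(1) unfolding r_def by simp
  have tail_summable: "summable (\<lambda>n. real_of_int (D (n + Suc i)) / r^n)"
    using summable_DS[OF assms(1), of "\<lambda>n. D (n + Suc i)" \<mu>] bounded unfolding r_def by simp
  have "DS D d = (\<Sum>n. real_of_int (D (n + Suc i)) / r^n / r^(Suc i))
                 + (\<Sum>j<Suc i. real_of_int (D j) / r^j)"
    using suminf_split_initial_segment[OF summable_DS[where A = D, OF assms], of "Suc i"]
    unfolding DS_def r_def by (simp add: power_add mult_ac)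
  also have "(\<Sum>n. real_of_int (D (n + Suc i)) / r^n / r^(Suc i)) = tail / r^(Suc i)"
    unfolding tail_def using suminf_divide[OF tail_summable] by simp
  finally have split: "DS D d = tail / r^(Suc i) + (\<Sum>j<Suc i. real_of_int (D j) / r^j)" .
  have "real_of_int (horner_prefix d D i) - r^i * DS D d = - (r^i * (tail / r^(Suc i)))"
    using of_int_horner_prefix[of d D i] assms(1) split unfolding r_def by (simp add: algebra_simps)
  also have "\<dots> = - (tail / r)"
    using r by simp
  finally have "\<bar>real_of_int (horner_prefix d D i) - r^i * DS D d\<bar> = \<bar>tail\<bar> / r"
    using r by simp
  also have "\<dots> \<le> \<mu> * r / (r - 1) / r"
    unfolding tail_def using abs_suminf_divide_power_le[OF r] bounded r
    by (intro divide_right_mono) auto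
  also have "\<dots> = \<mu> / (r - 1)"
    using r by simp
  finally show ?thesis unfolding r_def .
qed

lemma floor_mult_sub_mult_floor_bounds:
  fixes y :: real and d :: int
  assumes "d > 0"
  shows "0 \<le> \<lfloor>real_of_int d * y\<rfloor> - d * \<lfloor>y\<rfloor>" and "\<lfloor>real_of_int d * y\<rfloor> - d * \<lfloor>y\<rfloor> < d"
proof -
  have "real_of_int (d * \<lfloor>y\<rfloor>) \<le> real_of_int d * y"
    using assms by (simp add: mult_left_mono)
  then show "0 \<le> \<lfloor>real_of_int d * y\<rfloor> - d * \<lfloor>y\<rfloor>"
    by (simp add: le_floor_iff)
  have "real_of_int d * y < real_of_int d * (real_of_int \<lfloor>y\<rfloor> + 1)"
    using assms by (intro mult_strict_left_mono) linarith+
  then have "\<lfloor>real_of_int d * y\<rfloor> < d * \<lfloor>y\<rfloor> + d"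
    by (simp add: floor_less_iff distrib_left)
  then show "\<lfloor>real_of_int d * y\<rfloor> - d * \<lfloor>y\<rfloor> < d"
    by simp
qed

definition digit :: "int \<Rightarrow> real \<Rightarrow> nat \<Rightarrow> int" where
  "digit d S i = (if i = 0 then \<lfloor>S\<rfloor>
                  else \<lfloor>real_of_int d ^ i * S\<rfloor> - d * \<lfloor>real_of_int d ^ (i - 1) * S\<rfloor>)"

definition carry :: "int \<Rightarrow> (nat \<Rightarrow> int) \<Rightarrow> real \<Rightarrow> nat \<Rightarrow> int" where
  "carry d D S i = horner_prefix d D i - \<lfloor>real_of_int d ^ i * S\<rfloor>"

lemma digit_bounds:
  assumes "d > 0" and "i \<ge> 1"
  shows "0 \<le> digit d S i" and "digit d S i < d"
proof -
  obtain k where i: "i = Suc k" using assms(2) by (cases i) auto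
  have "digit d S i = \<lfloor>real_of_int d * (real_of_int d ^ k * S)\<rfloor> - d * \<lfloor>real_of_int d ^ k * S\<rfloor>"
    unfolding digit_def i by (simp add: mult.assoc)
  then show "0 \<le> digit d S i" and "digit d S i < d"
    using floor_mult_sub_mult_floor_bounds[OF assms(1)] by simp_all
qed

lemma digit_add_carry_0: "digit d S 0 + carry d D S 0 = D 0"
  by (simp add: digit_def carry_def)

lemma digit_add_carry_Suc:
  "digit d S (Suc i) + carry d D S (Suc i) = D (Suc i) + d * carry d D S i"
  by (simp add: digit_def carry_def algebra_simps)

lemma abs_carry_le:
  assumes "d > 1" and "\<And>i. \<bar>real_of_int (D i)\<bar> \<le> \<mu>"
  shows "\<bar>real_of_int (carry d D (DS D d) i)\<bar> \<le> 1 + \<mu> / (real_of_int d - 1)"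
  using horner_prefix_approx_DS[where D = D and i = i, OF assms] unfolding carry_def
  by (simp add: abs_le_iff) linarith

theorem corollary10:
  fixes d :: int and \<mu> :: real and A B :: "nat \<Rightarrow> int"
  assumes "d > 1" and "\<mu> > 0"
    and "\<And>i. 0 \<le> A i" and "\<And>i. real_of_int (A i) \<le> \<mu>"
    and "\<And>i. 0 \<le> B i" and "\<And>i. real_of_int (B i) \<le> \<mu>"
    and "DS A d < DS B d"
  shows "\<exists>C X :: nat \<Rightarrow> int.
           A 0 + C 0 + X 0 = B 0
         \<and> (\<forall>i\<ge>1. A i + C i + X i = B i + d * X (i - 1))
         \<and> 0 \<le> C 0 \<and> real_of_int (C 0) \<le> \<mu> * (real_of_int d / (real_of_int d - 1))
         \<and> (\<forall>i\<ge>1. 0 \<le> C i \<and> C i < d)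
         \<and> (\<forall>i. \<bar>real_of_int (X i)\<bar> \<le> 1 + \<mu> / (real_of_int d - 1))"
proof -
  define D where "D = (\<lambda>i. B i - A i)"
  define S where "S = DS D d"
  have A_bounded: "\<bar>real_of_int (A i)\<bar> \<le> \<mu>" and B_bounded: "\<bar>real_of_int (B i)\<bar> \<le> \<mu>"
    and D_bounded: "\<bar>real_of_int (D i)\<bar> \<le> \<mu>" for i
    using assms(3-6)[of i] unfolding D_def by auto
  have S_eq: "S = DS B d - DS A d"
    unfolding S_def D_def using DS_diff[where A = A and B = B, OF assms(1) A_bounded B_bounded] by simp
  have "0 \<le> S" and "S \<le> \<mu> * (real_of_int d / (real_of_int d - 1))"
    using S_eq assms(7) DS_nonneg[where A = A, OF assms(1,3) A_bounded]
      abs_DS_le[where A = B, OF assms(1) B_bounded]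
    by auto
  then have "0 \<le> digit d S 0" and "real_of_int (digit d S 0) \<le> \<mu> * (real_of_int d / (real_of_int d - 1))"
    unfolding digit_def by simp_all linarith
  moreover have "A i + digit d S i + carry d D S i = B i + d * carry d D S (i - 1)" if "i \<ge> 1" for i
    using that digit_add_carry_Suc[of d S "i - 1" D] unfolding D_def by (simp add: algebra_simps)
  moreover have "A 0 + digit d S 0 + carry d D S 0 = B 0"
    using digit_add_carry_0[of d S D] unfolding D_def by simp
  ultimately show ?thesis
    using digit_bounds[of d _ S] abs_carry_le[where D = D, OF assms(1) D_bounded, folded S_def] assms(1)
    by (intro exI[of _ "digit d S"] exI[of _ "carry d D S"]) auto
qed

end
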